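(* Let $\mathcal{E}$ (expressions) and $\mathcal{C}$ (constants) be sets, $\mathrm{enc}:\mathcal{E}\to\mathcal{C}$, $\mathrm{emb}:\mathcal{C}\to\mathcal{E}$, and $\bullet:\mathcal{E}\times\mathcal{E}\to\mathcal{E}$ an associative binary operation; define $e\ast f:=e\bullet\mathrm{emb}(\mathrm{enc}(f))$ and $\ulcorner\!\ulcorner e\urcorner\!\urcorner:=\mathrm{emb}(\mathrm{enc}(e))$. Suppose there is $f_{\mathrm{diag}}\in\mathcal{E}$ with $f_{\mathrm{diag}}\ast e=\ulcorner\!\ulcorner e\ast e\urcorner\!\urcorner$ for every $e\in\mathcal{E}$. Then for every $d\in\mathcal{E}$ there exists $f\in\mathcal{E}$ with $d\ast f=f$.
   Context: This is the setting of an "embeddable self-reference system": a self-reference system with application $\mathrm{app}(e,c)=e\bullet\mathrm{emb}(c)$; an $f_{\mathrm{diag}}$ as in the hypothesis is called a diagonaliser, and the conclusion is called the fixed-point property for all expressions. *)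

theory Defs
  imports Main
begin

definition star_app :: "('e \<Rightarrow> 'e \<Rightarrow> 'e) \<Rightarrow> ('e \<Rightarrow> 'c) \<Rightarrow> ('c \<Rightarrow> 'e) \<Rightarrow> 'e \<Rightarrow> 'e \<Rightarrow> 'e" where
  "star_app op enc emb e f = op e (emb (enc f))"

definition quote_quote :: "('e \<Rightarrow> 'c) \<Rightarrow> ('c \<Rightarrow> 'e) \<Rightarrow> 'e \<Rightarrow> 'e" where
  "quote_quote enc emb e = emb (enc e)"

end

theory Submission
  imports Defs
begin

text \<open>Given d, put e = d \<bullet> f_diag and
  f = e \<ast> e. Then d \<ast> f = d \<bullet> \<lceil>\<lceil>e \<ast> e\<rceil>\<rceil> = d \<bullet> (f_diag \<ast> e), and associativity
  regroups this as (d \<bullet> f_diag) \<ast> e = f.\<close>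

lemma star_app_op_left:
  assumes assoc: "\<And>x y z. op (op x y) z = op x (op y z)"
  shows "star_app op enc emb (op x y) z = op x (star_app op enc emb y z)"
  by (simp add: star_app_def assoc)

lemma star_app_quote_quote:
  "star_app op enc emb d e = op d (quote_quote enc emb e)"
  by (simp add: star_app_def quote_quote_def)

lemma diagonal_fixed_point:
  fixes d :: 'e
  assumes assoc: "\<And>x y z. op (op x y) z = op x (op y z)"
    and diag: "\<And>e. star_app op enc emb f_diag e = quote_quote enc emb (star_app op enc emb e e)"
  defines "e \<equiv> op d f_diag"
  shows "star_app op enc emb d (star_app op enc emb e e) = star_app op enc emb e e"
proof -
  have "star_app op enc emb d (star_app op enc emb e e)
      = op d (quote_quote enc emb (star_app op enc emb e e))"
    by (rule star_app_quote_quote)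
  also have "\<dots> = op d (star_app op enc emb f_diag e)"
    by (simp add: diag)
  also have "\<dots> = star_app op enc emb e e"
    by (simp add: e_def star_app_op_left assoc)
  finally show ?thesis .
qed

theorem theorem3:
  fixes op :: "'e \<Rightarrow> 'e \<Rightarrow> 'e" and enc :: "'e \<Rightarrow> 'c" and emb :: "'c \<Rightarrow> 'e"
    and f_diag :: 'e
  assumes assoc: "\<And>x y z. op (op x y) z = op x (op y z)"
    and diag: "\<And>e. star_app op enc emb f_diag e = quote_quote enc emb (star_app op enc emb e e)"
  shows "\<forall>d. \<exists>f. star_app op enc emb d f = f"
  using diagonal_fixed_point [OF assoc diag] by blast

end
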